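(* Let $G$ be a group and let $A\subseteq \operatorname{Aut}(G)$ be a subgroup of automorphisms, and regard $G$ as an $\mathcal{L}(A)$-group. Then $G$ is an $\mathcal{L}(A)$-equational domain if and only if there do not exist $a,b\in G$ with $a\neq 1$, $b\neq 1$ such that $[a,\phi(b)]=1$ for every $\phi\in A$.
   Context: $\mathcal{L}(A)=\{\cdot,{}^{-1},1\}\cup\{\phi\mid \phi\in A\}$ is the group language extended by unary function symbols, one for each $\phi\in A$, interpreted in $G$ as the automorphism $\phi$. An $\mathcal{L}(A)$-term in variables $X=\{x_1,\dots,x_n\}$ is a term of this language; up to equivalence it is a product $\phi_1(x_{i_1}^{\varepsilon_1})\cdots\phi_k(x_{i_k}^{\varepsilon_k})$ with $\phi_j\in A$, $\varepsilon_j\in\{-1,1\}$. An $\mathcal{L}(A)$-equation is $t(X)=1$ for an $\mathcal{L}(A)$-term $t$; an $\mathcal{L}(A)$-system is any set of such equations, and $V_G(S)\subseteq G^n$ denotes its solution set. A subset of $G^n$ is $\mathcal{L}(A)$-algebraic if it equals $V_G(S)$ for some $\mathcal{L}(A)$-system $S$ in $n$ variables. $G$ is an $\mathcal{L}(A)$-equational domain if for every $n$ and all $\mathcal{L}(A)$-algebraic $Y_1,Y_2\subseteq G^n$, the union $Y_1\cup Y_2$ is $\mathcal{L}(A)$-algebraic. Here $[x,y]=x^{-1}y^{-1}xy$. *)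

theory Defs
  imports "HOL-Algebra.Algebra"
begin

text \<open>Function symbols are the automorphisms themselves (maps 'a => 'a);
  a term is an L(A)-term when all of its function symbols lie in A.\<close>
datatype 'f lterm =
    Var nat
  | One
  | Mul "'f lterm" "'f lterm"
  | Inv "'f lterm"
  | App 'f "'f lterm"

fun tvars :: "'f lterm \<Rightarrow> nat set" where
  "tvars (Var i) = {i}"
| "tvars One = {}"
| "tvars (Mul s t) = tvars s \<union> tvars t"
| "tvars (Inv t) = tvars t"
| "tvars (App f t) = tvars t"

fun tfuns :: "'f lterm \<Rightarrow> 'f set" where
  "tfuns (Var i) = {}"
| "tfuns One = {}"
| "tfuns (Mul s t) = tfuns s \<union> tfuns t"
| "tfuns (Inv t) = tfuns t"
| "tfuns (App f t) = insert f (tfuns t)"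

fun teval :: "('a, 'b) monoid_scheme \<Rightarrow> 'a list \<Rightarrow> ('a \<Rightarrow> 'a) lterm \<Rightarrow> 'a" where
  "teval G xs (Var i) = xs ! i"
| "teval G xs One = \<one>\<^bsub>G\<^esub>"
| "teval G xs (Mul s t) = teval G xs s \<otimes>\<^bsub>G\<^esub> teval G xs t"
| "teval G xs (Inv t) = inv\<^bsub>G\<^esub> (teval G xs t)"
| "teval G xs (App f t) = f (teval G xs t)"

definition is_LA_term :: "('a \<Rightarrow> 'a) set \<Rightarrow> nat \<Rightarrow> ('a \<Rightarrow> 'a) lterm \<Rightarrow> bool" where
  "is_LA_term A n t \<longleftrightarrow> tvars t \<subseteq> {..<n} \<and> tfuns t \<subseteq> A"

definition Gpow :: "('a, 'b) monoid_scheme \<Rightarrow> nat \<Rightarrow> 'a list set" where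
  "Gpow G n = {xs. length xs = n \<and> set xs \<subseteq> carrier G}"

text \<open>Solution set of a system S (a set of terms t, standing for equations t = 1).\<close>
definition VG :: "('a, 'b) monoid_scheme \<Rightarrow> nat \<Rightarrow> ('a \<Rightarrow> 'a) lterm set \<Rightarrow> 'a list set" where
  "VG G n S = {xs \<in> Gpow G n. \<forall>t\<in>S. teval G xs t = \<one>\<^bsub>G\<^esub>}"

definition LA_algebraic ::
  "('a, 'b) monoid_scheme \<Rightarrow> ('a \<Rightarrow> 'a) set \<Rightarrow> nat \<Rightarrow> 'a list set \<Rightarrow> bool" where
  "LA_algebraic G A n Y \<longleftrightarrow> (\<exists>S. (\<forall>t\<in>S. is_LA_term A n t) \<and> Y = VG G n S)"

definition LA_equational_domain :: "('a, 'b) monoid_scheme \<Rightarrow> ('a \<Rightarrow> 'a) set \<Rightarrow> bool" where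
  "LA_equational_domain G A \<longleftrightarrow>
     (\<forall>n Y1 Y2. LA_algebraic G A n Y1 \<and> LA_algebraic G A n Y2 \<longrightarrow>
                LA_algebraic G A n (Y1 \<union> Y2))"

definition commutator :: "('a, 'b) monoid_scheme \<Rightarrow> 'a \<Rightarrow> 'a \<Rightarrow> 'a" where
  "commutator G x y = inv\<^bsub>G\<^esub> x \<otimes>\<^bsub>G\<^esub> inv\<^bsub>G\<^esub> y \<otimes>\<^bsub>G\<^esub> x \<otimes>\<^bsub>G\<^esub> y"

end

theory Submission
  imports Defs
begin

text \<open>If no pair \<open>a, b \<noteq> 1\<close> satisfies \<open>[a, \<phi> b] = 1\<close> for all \<open>\<phi> \<in> A\<close>, then
  \<open>V(S\<^sub>1) \<union> V(S\<^sub>2)\<close> is cut out by the equations \<open>[s, \<phi>(t)] = 1\<close> with \<open>s \<in> S\<^sub>1\<close>,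
  \<open>t \<in> S\<^sub>2\<close>, \<open>\<phi> \<in> A\<close>: at a point outside both sets some \<open>s\<close> and \<open>t\<close> take nontrivial values,
  and these would form such a pair.
  Conversely, given such a pair \<open>a, b\<close>, the union \<open>{x\<^sub>1 = 1} \<union> {x\<^sub>2 = 1}\<close> is not algebraic:
  every element of the \<open>A\<close>-invariant subgroup generated by \<open>a\<close> commutes with every element of
  the one generated by \<open>b\<close>, so each \<open>\<L>(A)\<close>-term \<open>t\<close> satisfies \<open>t(a, b) = t(a, 1) t(1, b)\<close>.
  Hence every equation holding at \<open>(a, 1)\<close> and \<open>(1, b)\<close> also holds at \<open>(a, b)\<close>.\<close>

definition LA_zero_divisors :: "('a, 'b) monoid_scheme \<Rightarrow> ('a \<Rightarrow> 'a) set \<Rightarrow> 'a \<Rightarrow> 'a \<Rightarrow> bool" where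
  "LA_zero_divisors G A a b \<longleftrightarrow>
     a \<in> carrier G \<and> b \<in> carrier G \<and> a \<noteq> \<one>\<^bsub>G\<^esub> \<and> b \<noteq> \<one>\<^bsub>G\<^esub> \<and>
     (\<forall>\<phi>\<in>A. commutator G a (\<phi> b) = \<one>\<^bsub>G\<^esub>)"

definition centralizer :: "('a, 'b) monoid_scheme \<Rightarrow> 'a set \<Rightarrow> 'a set" where
  "centralizer G S = {g \<in> carrier G. \<forall>s\<in>S. g \<otimes>\<^bsub>G\<^esub> s = s \<otimes>\<^bsub>G\<^esub> g}"

definition comm_term :: "'f lterm \<Rightarrow> 'f lterm \<Rightarrow> 'f lterm" where
  "comm_term s t = Mul (Mul (Mul (Inv s) (Inv t)) s) t"

definition commutator_system :: "'f set \<Rightarrow> 'f lterm set \<Rightarrow> 'f lterm set \<Rightarrow> 'f lterm set" where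
  "commutator_system A S\<^sub>1 S\<^sub>2 = {comm_term s (App \<phi> t) | s \<phi> t. s \<in> S\<^sub>1 \<and> \<phi> \<in> A \<and> t \<in> S\<^sub>2}"

lemma teval_comm_term: "teval G xs (comm_term s t) = commutator G (teval G xs s) (teval G xs t)"
  by (simp add: comm_term_def commutator_def)

lemma is_LA_term_simps [simp]:
  "is_LA_term A n (Var i) \<longleftrightarrow> i < n"
  "is_LA_term A n One"
  "is_LA_term A n (Mul s t) \<longleftrightarrow> is_LA_term A n s \<and> is_LA_term A n t"
  "is_LA_term A n (Inv t) \<longleftrightarrow> is_LA_term A n t"
  "is_LA_term A n (App f t) \<longleftrightarrow> f \<in> A \<and> is_LA_term A n t"
  by (auto simp: is_LA_term_def)

lemma is_LA_term_comm_term [simp]: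
  "is_LA_term A n (comm_term s t) \<longleftrightarrow> is_LA_term A n s \<and> is_LA_term A n t"
  by (auto simp: comm_term_def)

lemma is_LA_term_commutator_system:
  assumes "\<forall>t\<in>S\<^sub>1. is_LA_term A n t" and "\<forall>t\<in>S\<^sub>2. is_LA_term A n t"
  shows "\<forall>t\<in>commutator_system A S\<^sub>1 S\<^sub>2. is_LA_term A n t"
  using assms by (auto simp: commutator_system_def)

lemma teval_mem_invariant_subgroup:
  assumes "subgroup H G" and "\<And>\<phi> x. \<phi> \<in> A \<Longrightarrow> x \<in> H \<Longrightarrow> \<phi> x \<in> H" and "set xs \<subseteq> H"
  shows "is_LA_term A (length xs) t \<Longrightarrow> teval G xs t \<in> H"
  by (induction t)
    (use assms in \<open>auto simp: subgroup.one_closed subgroup.m_closed subgroup.m_inv_closed\<close>)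

lemma (in group) commutator_eq_one_iff:
  assumes "x \<in> carrier G" "y \<in> carrier G"
  shows "commutator G x y = \<one> \<longleftrightarrow> x \<otimes> y = y \<otimes> x"
proof -
  have "commutator G x y = inv (y \<otimes> x) \<otimes> (x \<otimes> y)"
    using assms by (simp add: commutator_def inv_mult_group m_assoc)
  also have "\<dots> = \<one> \<longleftrightarrow> x \<otimes> y = y \<otimes> x"
    using assms by (metis inv_closed inv_equality inv_inv m_closed r_inv)
  finally show ?thesis .
qed

lemma centralizer_commute: "g \<in> centralizer G S \<Longrightarrow> s \<in> S \<Longrightarrow> g \<otimes>\<^bsub>G\<^esub> s = s \<otimes>\<^bsub>G\<^esub> g"
  by (simp add: centralizer_def)

lemma (in group) inv_commute:
  assumes "x \<in> carrier G" "y \<in> carrier G" "x \<otimes> y = y \<otimes> x"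
  shows "inv x \<otimes> y = y \<otimes> inv x"
proof -
  have "inv x \<otimes> y = inv x \<otimes> (y \<otimes> x) \<otimes> inv x"
    using assms by (simp add: m_assoc)
  also have "\<dots> = inv x \<otimes> (x \<otimes> y) \<otimes> inv x"
    by (simp only: assms(3))
  also have "\<dots> = y \<otimes> inv x"
    using assms(1,2) by (simp add: m_assoc[symmetric])
  finally show ?thesis .
qed

lemma (in group) mult_commute:
  assumes "x \<in> carrier G" "y \<in> carrier G" "z \<in> carrier G"
    and "x \<otimes> z = z \<otimes> x" "y \<otimes> z = z \<otimes> y"
  shows "x \<otimes> y \<otimes> z = z \<otimes> (x \<otimes> y)"
proof -
  have "x \<otimes> y \<otimes> z = x \<otimes> (z \<otimes> y)"
    using assms(1-3) by (simp add: m_assoc assms(5))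
  also have "\<dots> = z \<otimes> (x \<otimes> y)"
    using assms(1-3) by (simp add: m_assoc[symmetric] assms(4))
  finally show ?thesis .
qed

lemma (in group) subgroup_centralizer:
  assumes "S \<subseteq> carrier G"
  shows "subgroup (centralizer G S) G"
proof (rule subgroupI)
  show "centralizer G S \<subseteq> carrier G"
    by (auto simp: centralizer_def)
  have "\<one> \<in> centralizer G S"
    using assms by (auto simp: centralizer_def)
  then show "centralizer G S \<noteq> {}"
    by blast
next
  fix g assume "g \<in> centralizer G S"
  then show "inv g \<in> centralizer G S"
    using assms inv_commute by (auto simp: centralizer_def)
next
  fix g h assume "g \<in> centralizer G S" "h \<in> centralizer G S"
  then show "g \<otimes> h \<in> centralizer G S"
    using assms mult_commute by (auto simp: centralizer_def)
qed

locale LA_group = group G for G :: "('a, 'b) monoid_scheme" (structure) +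
  fixes A :: "('a \<Rightarrow> 'a) set"
  assumes A_subgroup: "subgroup A (AutoGroup G)"
begin

abbreviation A_orbit :: "'a \<Rightarrow> 'a set" where
  "A_orbit c \<equiv> (\<lambda>\<phi>. \<phi> c) ` A"

lemma A_auto: "\<phi> \<in> A \<Longrightarrow> \<phi> \<in> auto G"
  using subgroup.subset[OF A_subgroup] by (auto simp: AutoGroup_def)

lemma A_group_hom: "\<phi> \<in> A \<Longrightarrow> group_hom G G \<phi>"
  using A_auto by (simp add: auto_def group_hom_def group_hom_axioms_def)

lemma A_closed: "\<phi> \<in> A \<Longrightarrow> x \<in> carrier G \<Longrightarrow> \<phi> x \<in> carrier G"
  by (rule group_hom.hom_closed[OF A_group_hom])

lemma A_one [simp]: "\<phi> \<in> A \<Longrightarrow> \<phi> \<one> = \<one>"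
  by (rule group_hom.hom_one[OF A_group_hom])

lemma A_mult [simp]: "\<phi> \<in> A \<Longrightarrow> x \<in> carrier G \<Longrightarrow> y \<in> carrier G \<Longrightarrow> \<phi> (x \<otimes> y) = \<phi> x \<otimes> \<phi> y"
  by (rule group_hom.hom_mult[OF A_group_hom])

lemma id_in_A: "(\<lambda>x\<in>carrier G. x) \<in> A"
  using subgroup.one_closed[OF A_subgroup] by (simp add: AutoGroup_def BijGroup_def)

lemma A_orbit_subset: "c \<in> carrier G \<Longrightarrow> A_orbit c \<subseteq> carrier G"
  using A_closed by blast

lemma A_mult_apply:
  "\<phi> \<in> A \<Longrightarrow> \<psi> \<in> A \<Longrightarrow> x \<in> carrier G \<Longrightarrow> (\<phi> \<otimes>\<^bsub>AutoGroup G\<^esub> \<psi>) x = \<phi> (\<psi> x)"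
  using A_auto by (auto simp: AutoGroup_def BijGroup_def auto_def compose_def)

lemma A_factor:
  assumes "\<phi> \<in> A" "\<psi> \<in> A"
  obtains \<chi> where "\<chi> \<in> A" "\<And>x. x \<in> carrier G \<Longrightarrow> \<psi> (\<chi> x) = \<phi> x"
proof -
  interpret Aut: group "AutoGroup G"
    by (rule AutoGroup)
  define \<chi> where "\<chi> = inv\<^bsub>AutoGroup G\<^esub> \<psi> \<otimes>\<^bsub>AutoGroup G\<^esub> \<phi>"
  have "\<chi> \<in> A"
    unfolding \<chi>_def using assms A_subgroup by (simp add: subgroup.m_closed subgroup.m_inv_closed)
  moreover have "\<psi> \<otimes>\<^bsub>AutoGroup G\<^esub> \<chi> = \<phi>"
    unfolding \<chi>_def using assms subgroup.subset[OF A_subgroup]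
    by (simp add: Aut.m_assoc[symmetric] subsetD)
  ultimately show ?thesis
    using that assms A_mult_apply by metis
qed

lemma teval_closed:
  assumes "set xs \<subseteq> carrier G" "is_LA_term A (length xs) t"
  shows "teval G xs t \<in> carrier G"
  by (rule teval_mem_invariant_subgroup[OF subgroup_self _ assms]) (simp add: A_closed)

lemma centralizer_A_orbit_invariant:
  assumes "c \<in> carrier G" "g \<in> centralizer G (A_orbit c)" "\<psi> \<in> A"
  shows "\<psi> g \<in> centralizer G (A_orbit c)"
  unfolding centralizer_def
proof (intro CollectI conjI ballI)
  have g: "g \<in> carrier G"
    using assms(2) by (simp add: centralizer_def)
  then show "\<psi> g \<in> carrier G"
    using A_closed assms(3) by blast
  fix d assume "d \<in> A_orbit c"
  then obtain \<phi> where "\<phi> \<in> A" and d: "d = \<phi> c"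
    by blast
  then obtain \<chi> where "\<chi> \<in> A" and \<chi>: "\<psi> (\<chi> c) = \<phi> c"
    using A_factor assms(1,3) by metis
  then have "g \<otimes> \<chi> c = \<chi> c \<otimes> g"
    using assms(2) by (auto simp: centralizer_def)
  then have "\<psi> (g \<otimes> \<chi> c) = \<psi> (\<chi> c \<otimes> g)"
    by simp
  then show "\<psi> g \<otimes> d = d \<otimes> \<psi> g"
    using g assms \<open>\<chi> \<in> A\<close> A_closed by (simp add: d \<chi>[symmetric])
qed

lemma self_mem_A_orbit: "c \<in> carrier G \<Longrightarrow> c \<in> A_orbit c"
  by (rule image_eqI[where x = "\<lambda>x\<in>carrier G. x"]) (simp_all add: id_in_A)

lemma centralizer_A_orbit_sym:
  assumes "c \<in> carrier G" "g \<in> centralizer G (A_orbit c)"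
  shows "c \<in> centralizer G (A_orbit g)"
  unfolding centralizer_def
proof (intro CollectI conjI ballI)
  fix d assume "d \<in> A_orbit g"
  then obtain \<psi> where "\<psi> \<in> A" and d: "d = \<psi> g"
    by blast
  have "\<psi> g \<in> centralizer G (A_orbit c)"
    using centralizer_A_orbit_invariant[OF assms \<open>\<psi> \<in> A\<close>] .
  then show "c \<otimes> d = d \<otimes> c"
    using centralizer_commute self_mem_A_orbit[OF assms(1)] by (metis d)
qed (rule assms(1))

lemma teval_mem_centralizer_A_orbit:
  assumes "c \<in> carrier G" "set xs \<subseteq> centralizer G (A_orbit c)" "is_LA_term A (length xs) t"
  shows "teval G xs t \<in> centralizer G (A_orbit c)"
  by (rule teval_mem_invariant_subgroup[OF subgroup_centralizer[OF A_orbit_subset[OF assms(1)]] _ assms(2,3)])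
    (simp add: centralizer_A_orbit_invariant[OF assms(1)])

lemma teval_commute:
  assumes "set xs \<subseteq> carrier G" "set ys \<subseteq> carrier G"
    and "\<And>x y. x \<in> set xs \<Longrightarrow> y \<in> set ys \<Longrightarrow> x \<in> centralizer G (A_orbit y)"
    and "is_LA_term A (length xs) s" "is_LA_term A (length ys) t"
  shows "teval G xs s \<otimes> teval G ys t = teval G ys t \<otimes> teval G xs s"
proof -
  let ?u = "teval G xs s"
  have "?u \<in> centralizer G (A_orbit y)" if "y \<in> set ys" for y
    using teval_mem_centralizer_A_orbit assms that by blast
  then have "set ys \<subseteq> centralizer G (A_orbit ?u)"
    using centralizer_A_orbit_sym assms(2) by blast
  then have "teval G ys t \<in> centralizer G (A_orbit ?u)"
    using teval_mem_centralizer_A_orbit teval_closed assms by blast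
  moreover have "?u \<in> A_orbit ?u"
    using self_mem_A_orbit teval_closed assms by blast
  ultimately show ?thesis
    by (metis centralizer_commute)
qed

lemma teval_map2_mult:
  assumes "length xs = length ys" "set xs \<subseteq> carrier G" "set ys \<subseteq> carrier G"
    and "\<And>x y. x \<in> set xs \<Longrightarrow> y \<in> set ys \<Longrightarrow> x \<in> centralizer G (A_orbit y)"
  shows "is_LA_term A (length xs) t \<Longrightarrow> teval G (map2 (\<otimes>) xs ys) t = teval G xs t \<otimes> teval G ys t"
proof (induction t)
  case (Var i)
  then show ?case
    using assms(1) by simp
next
  case One
  then show ?case
    by simp
next
  case (Mul s t)
  let ?x\<^sub>1 = "teval G xs s" and ?y\<^sub>1 = "teval G ys s"
  let ?x\<^sub>2 = "teval G xs t" and ?y\<^sub>2 = "teval G ys t"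
  have closed: "?x\<^sub>1 \<in> carrier G" "?y\<^sub>1 \<in> carrier G" "?x\<^sub>2 \<in> carrier G" "?y\<^sub>2 \<in> carrier G"
    using Mul.prems teval_closed assms by auto
  have "?x\<^sub>2 \<otimes> ?y\<^sub>1 = ?y\<^sub>1 \<otimes> ?x\<^sub>2"
    using teval_commute[OF assms(2-4)] Mul.prems assms(1) by simp
  then have "(?x\<^sub>1 \<otimes> ?y\<^sub>1) \<otimes> (?x\<^sub>2 \<otimes> ?y\<^sub>2) = (?x\<^sub>1 \<otimes> ?x\<^sub>2) \<otimes> (?y\<^sub>1 \<otimes> ?y\<^sub>2)"
    using closed by (metis m_assoc m_closed)
  then show ?case
    using Mul by simp
next
  case (Inv t)
  let ?x = "teval G xs t" and ?y = "teval G ys t"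
  have closed: "?x \<in> carrier G" "?y \<in> carrier G"
    using Inv.prems teval_closed assms by auto
  have "?x \<otimes> ?y = ?y \<otimes> ?x"
    using teval_commute[OF assms(2-4)] Inv.prems assms(1) by simp
  then have "inv (?x \<otimes> ?y) = inv ?x \<otimes> inv ?y"
    using closed by (simp add: inv_mult_group)
  then show ?case
    using Inv by simp
next
  case (App f t)
  then show ?case
    using teval_closed assms by simp
qed

lemma VG_map2_mult:
  assumes "xs \<in> VG G n S" "ys \<in> VG G n S" "\<forall>t\<in>S. is_LA_term A n t"
    and "\<And>x y. x \<in> set xs \<Longrightarrow> y \<in> set ys \<Longrightarrow> x \<in> centralizer G (A_orbit y)"
  shows "map2 (\<otimes>) xs ys \<in> VG G n S"
proof -
  have "length xs = n" "length ys = n" "set xs \<subseteq> carrier G" "set ys \<subseteq> carrier G"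
    using assms(1,2) by (auto simp: VG_def Gpow_def)
  moreover have "set (map2 (\<otimes>) xs ys) \<subseteq> carrier G"
    using calculation by (auto elim!: in_set_zipE)
  ultimately show ?thesis
    using assms teval_map2_mult[of xs ys] by (auto simp: VG_def Gpow_def)
qed

lemma mem_centralizer_A_orbit_iff:
  assumes "a \<in> carrier G" "b \<in> carrier G"
  shows "a \<in> centralizer G (A_orbit b) \<longleftrightarrow> (\<forall>\<phi>\<in>A. commutator G a (\<phi> b) = \<one>)"
  using assms A_closed commutator_eq_one_iff by (auto simp: centralizer_def)

lemma VG_union_subset_commutator_system:
  assumes "\<forall>t\<in>S\<^sub>1. is_LA_term A n t" "\<forall>t\<in>S\<^sub>2. is_LA_term A n t"
  shows "VG G n S\<^sub>1 \<union> VG G n S\<^sub>2 \<subseteq> VG G n (commutator_system A S\<^sub>1 S\<^sub>2)"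
proof
  fix xs assume xs: "xs \<in> VG G n S\<^sub>1 \<union> VG G n S\<^sub>2"
  then have "xs \<in> Gpow G n"
    by (auto simp: VG_def)
  then have closed: "teval G xs t \<in> carrier G" if "is_LA_term A n t" for t
    using teval_closed that by (auto simp: Gpow_def)
  have "teval G xs (comm_term s (App \<phi> t)) = \<one>" if "s \<in> S\<^sub>1" "\<phi> \<in> A" "t \<in> S\<^sub>2" for s \<phi> t
  proof -
    have "teval G xs s = \<one> \<or> teval G xs t = \<one>"
      using xs that by (auto simp: VG_def)
    then show ?thesis
      using closed assms that A_closed by (auto simp: teval_comm_term commutator_eq_one_iff)
  qed
  then show "xs \<in> VG G n (commutator_system A S\<^sub>1 S\<^sub>2)"
    using \<open>xs \<in> Gpow G n\<close> by (auto simp: VG_def commutator_system_def)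
qed

lemma commutator_system_subset_VG_union:
  assumes "\<nexists>a b. LA_zero_divisors G A a b"
    and "\<forall>t\<in>S\<^sub>1. is_LA_term A n t" "\<forall>t\<in>S\<^sub>2. is_LA_term A n t"
  shows "VG G n (commutator_system A S\<^sub>1 S\<^sub>2) \<subseteq> VG G n S\<^sub>1 \<union> VG G n S\<^sub>2"
proof
  fix xs assume xs: "xs \<in> VG G n (commutator_system A S\<^sub>1 S\<^sub>2)"
  then have closed: "teval G xs t \<in> carrier G" if "is_LA_term A n t" for t
    using teval_closed that by (auto simp: VG_def Gpow_def)
  show "xs \<in> VG G n S\<^sub>1 \<union> VG G n S\<^sub>2"
  proof (rule ccontr)
    assume "xs \<notin> VG G n S\<^sub>1 \<union> VG G n S\<^sub>2"
    then obtain s t where st: "s \<in> S\<^sub>1" "t \<in> S\<^sub>2" "teval G xs s \<noteq> \<one>" "teval G xs t \<noteq> \<one>"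
      using xs by (auto simp: VG_def)
    moreover have "commutator G (teval G xs s) (\<phi> (teval G xs t)) = \<one>" if "\<phi> \<in> A" for \<phi>
      using xs st that by (force simp: VG_def commutator_system_def teval_comm_term)
    ultimately have "LA_zero_divisors G A (teval G xs s) (teval G xs t)"
      using closed assms(2,3) by (simp add: LA_zero_divisors_def)
    then show False
      using assms(1) by blast
  qed
qed

lemma equational_domain_if_no_zero_divisors:
  assumes "\<nexists>a b. LA_zero_divisors G A a b"
  shows "LA_equational_domain G A"
  unfolding LA_equational_domain_def LA_algebraic_def
proof (intro allI impI)
  fix n Y\<^sub>1 Y\<^sub>2
  assume "(\<exists>S. (\<forall>t\<in>S. is_LA_term A n t) \<and> Y\<^sub>1 = VG G n S) \<and> (\<exists>S. (\<forall>t\<in>S. is_LA_term A n t) \<and> Y\<^sub>2 = VG G n S)"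
  then obtain S\<^sub>1 S\<^sub>2 where S: "\<forall>t\<in>S\<^sub>1. is_LA_term A n t" "\<forall>t\<in>S\<^sub>2. is_LA_term A n t"
    and Y: "Y\<^sub>1 = VG G n S\<^sub>1" "Y\<^sub>2 = VG G n S\<^sub>2"
    by blast
  then have "Y\<^sub>1 \<union> Y\<^sub>2 = VG G n (commutator_system A S\<^sub>1 S\<^sub>2)"
    using VG_union_subset_commutator_system commutator_system_subset_VG_union assms by blast
  then show "\<exists>S. (\<forall>t\<in>S. is_LA_term A n t) \<and> Y\<^sub>1 \<union> Y\<^sub>2 = VG G n S"
    using is_LA_term_commutator_system[OF S] by blast
qed

lemma not_equational_domain_if_zero_divisors:
  assumes "LA_zero_divisors G A a b"
  shows "\<not> LA_equational_domain G A"
proof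
  have a: "a \<in> carrier G" "a \<noteq> \<one>" and b: "b \<in> carrier G" "b \<noteq> \<one>"
    using assms by (auto simp: LA_zero_divisors_def)
  assume "LA_equational_domain G A"
  moreover have "LA_algebraic G A 2 (VG G 2 {Var i})" if "i < 2" for i
    unfolding LA_algebraic_def using that by (intro exI[of _ "{Var i}"]) simp
  ultimately have "LA_algebraic G A 2 (VG G 2 {Var 0} \<union> VG G 2 {Var 1})"
    by (simp add: LA_equational_domain_def)
  then obtain S where S: "\<forall>t\<in>S. is_LA_term A 2 t" "VG G 2 {Var 0} \<union> VG G 2 {Var 1} = VG G 2 S"
    by (auto simp: LA_algebraic_def)
  have "[a, \<one>] \<in> VG G 2 {Var 1}" "[\<one>, b] \<in> VG G 2 {Var 0}"
    using a b by (auto simp: VG_def Gpow_def)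
  then have "[a, \<one>] \<in> VG G 2 S" "[\<one>, b] \<in> VG G 2 S"
    using S(2) by blast+
  moreover have "x \<in> centralizer G (A_orbit y)" if "x \<in> set [a, \<one>]" "y \<in> set [\<one>, b]" for x y
  proof -
    have "a \<in> centralizer G (A_orbit b)"
      using assms a b mem_centralizer_A_orbit_iff by (simp add: LA_zero_divisors_def)
    moreover have "a \<in> centralizer G (A_orbit \<one>)"
      using a by (auto simp: centralizer_def)
    moreover have "\<one> \<in> centralizer G (A_orbit y)"
      using that b subgroup.one_closed[OF subgroup_centralizer[OF A_orbit_subset]] by auto
    ultimately show ?thesis
      using that by auto
  qed
  ultimately have "map2 (\<otimes>) [a, \<one>] [\<one>, b] \<in> VG G 2 S"
    using VG_map2_mult S(1) by blast
  then have "[a, b] \<in> VG G 2 {Var 0} \<union> VG G 2 {Var 1}"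
    using S(2) a b by simp
  then show False
    using a b by (auto simp: VG_def)
qed

end

theorem theorem3:
  fixes G :: "('a, 'b) monoid_scheme" and A :: "('a \<Rightarrow> 'a) set"
  assumes "group G"
    and "subgroup A (AutoGroup G)"
  shows "LA_equational_domain G A \<longleftrightarrow>
         \<not> (\<exists>a\<in>carrier G. \<exists>b\<in>carrier G. a \<noteq> \<one>\<^bsub>G\<^esub> \<and> b \<noteq> \<one>\<^bsub>G\<^esub> \<and>
              (\<forall>\<phi>\<in>A. commutator G a (\<phi> b) = \<one>\<^bsub>G\<^esub>))"
proof -
  interpret LA_group G A
    using assms by (simp add: LA_group_def LA_group_axioms_def)
  have "(\<exists>a\<in>carrier G. \<exists>b\<in>carrier G. a \<noteq> \<one>\<^bsub>G\<^esub> \<and> b \<noteq> \<one>\<^bsub>G\<^esub> \<and>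
          (\<forall>\<phi>\<in>A. commutator G a (\<phi> b) = \<one>\<^bsub>G\<^esub>))
      \<longleftrightarrow> (\<exists>a b. LA_zero_divisors G A a b)"
    by (auto simp: LA_zero_divisors_def)
  then show ?thesis
    using equational_domain_if_no_zero_divisors not_equational_domain_if_zero_divisors by blast
qed

end
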